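(* Let $P(T)=a_0T^N+a_1T^{N-1}+\cdots+a_N\in\mathbb{L}_p[T]$ with $a_0\neq 0$, $a_N\neq0$, let $s=s^P_{\max}$ and $m=m^P_{\max}$, let $u\in\mathcal{O}_{\mathbb{L}_p}^*$, and write $P_u(T)=P(T+up^{s})=\sum_{i=0}^Nb_{N-i}T^i$. Then: (1) on the range $0\leq x\leq m$, the Newton polygons $\mathrm{NP}(P_u)$ and $\mathrm{NP}(P)$ coincide; (2) for $m<k\leq N$, the point $(k,v_p(b_k))$ lies on or above $\mathrm{NP}(P)$, i.e. $v_p(b_k)\geq v_p(a_m)+s(k-m)$.
   Context: $\mathbb{L}_p$ is the $p$-adic Mal'cev–Neumann field of formal sums $\sum_{x\in\mathbb{Q}}[\alpha_x]p^x$ ($\alpha_x\in\bar{\mathbb{F}}_p$, $[\cdot]$ Teichmüller lift, well-ordered support), with valuation $v_p$ = minimum of support, valuation ring $\mathcal{O}_{\mathbb{L}_p}$ and units $\mathcal{O}_{\mathbb{L}_p}^*$. $\mathrm{NP}(P)$ is the lower boundary of the convex hull of the points $(k,v_p(a_k))$ with $a_k\neq0$; its vertices are the breakpoints; $m^P_{\max}$ is the largest breakpoint $<N$ and $s^P_{\max}=\frac{v_p(a_N)-v_p(a_{m^P_{\max}})}{N-m^P_{\max}}$ is the maximal slope. *)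

theory Defs
  imports "HOL-Analysis.Analysis" "HOL-Computational_Algebra.Computational_Algebra"
begin

text \<open>Abstract model of the p-adic Mal'cev-Neumann field: a field with a
  rational-valued valuation v (meaningful on nonzero elements; v 0 plays the
  role of +infinity and is never used) and a family of powers p^r, r rational.\<close>
definition padic_valued_field :: "nat \<Rightarrow> ('a::field \<Rightarrow> rat) \<Rightarrow> (rat \<Rightarrow> 'a) \<Rightarrow> bool" where
  "padic_valued_field p v pw \<longleftrightarrow>
     prime p \<and>
     (\<forall>x y. x \<noteq> 0 \<longrightarrow> y \<noteq> 0 \<longrightarrow> v (x * y) = v x + v y) \<and>
     (\<forall>x y. x \<noteq> 0 \<longrightarrow> y \<noteq> 0 \<longrightarrow> x + y \<noteq> 0 \<longrightarrow> min (v x) (v y) \<le> v (x + y)) \<and>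
     (\<forall>r. pw r \<noteq> 0 \<and> v (pw r) = r) \<and>
     (\<forall>r q. pw (r + q) = pw r * pw q) \<and>
     pw 1 = of_nat p"

definition val_unit :: "('a::field \<Rightarrow> rat) \<Rightarrow> 'a \<Rightarrow> bool" where
  "val_unit v u \<longleftrightarrow> u \<noteq> 0 \<and> v u = 0"

text \<open>Paper's indexing: P(T) = a_0 T^N + a_1 T^(N-1) + ... + a_N, so a_k = coeff P (N - k).\<close>
definition nc :: "'a::zero poly \<Rightarrow> nat \<Rightarrow> 'a" where
  "nc P k = coeff P (degree P - k)"

definition np_points :: "('a::field \<Rightarrow> rat) \<Rightarrow> 'a poly \<Rightarrow> (real \<times> real) set" where
  "np_points v P = {(real k, real_of_rat (v (nc P k))) | k. k \<le> degree P \<and> nc P k \<noteq> 0}"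

definition newton_polygon :: "('a::field \<Rightarrow> rat) \<Rightarrow> 'a poly \<Rightarrow> real \<Rightarrow> real" where
  "newton_polygon v P x = Inf {y. (x, y) \<in> convex hull (np_points v P)}"

definition np_breakpoint :: "('a::field \<Rightarrow> rat) \<Rightarrow> 'a poly \<Rightarrow> nat \<Rightarrow> bool" where
  "np_breakpoint v P k \<longleftrightarrow> k \<le> degree P \<and> nc P k \<noteq> 0 \<and>
     (real k, real_of_rat (v (nc P k))) extreme_point_of
       {(x, y + t) | x y t. (x, y) \<in> convex hull (np_points v P) \<and> t \<ge> 0}"

definition m_max :: "('a::field \<Rightarrow> rat) \<Rightarrow> 'a poly \<Rightarrow> nat" where
  "m_max v P = Max {k. np_breakpoint v P k \<and> k < degree P}"

definition s_max :: "('a::field \<Rightarrow> rat) \<Rightarrow> 'a poly \<Rightarrow> rat" where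
  "s_max v P = (v (nc P (degree P)) - v (nc P (m_max v P))) / of_nat (degree P - m_max v P)"

end

theory Submission
  imports Defs
begin

text \<open>Write a_k, b_k for the coefficients of P and of its shift P_u in the paper's indexing, and
  L for the line through (m, v a_m) and (N, v a_N). Since (m, v a_m) is a vertex of NP(P) and no
  vertex lies strictly between m and N, every point (k, v a_k) lies on or above L, strictly above
  it for k < m. In the Taylor expansion b_k = sum over j <= k of binom(N - j, k - j) a_j
  (u p^s)^(k - j), the term of index j has valuation at least v a_j + (k - j) s >= L(k), and for
  k = m the term j = m is the only one of minimal valuation, so v b_m = v a_m. Hence the points of
  P_u lie above NP(P), which gives (2) and NP(P) <= NP(P_u). Conversely P is the shift of P_u by
  - u p^s, so the points of P left of m lie above NP(P_u); since L supports all points of P and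
  passes through the vertex at m, NP(P) over [0, m] depends only on these points, whence
  NP(P_u) <= NP(P) there.\<close>

lemma valuation_mult:
  assumes "padic_valued_field p v pw" "x \<noteq> 0" "y \<noteq> 0"
  shows "v (x * y) = v x + v y"
  using assms unfolding padic_valued_field_def by blast

lemma valuation_add_ge_min:
  assumes "padic_valued_field p v pw" "x \<noteq> 0" "y \<noteq> 0" "x + y \<noteq> 0"
  shows "min (v x) (v y) \<le> v (x + y)"
  using assms unfolding padic_valued_field_def by blast

lemma valuation_pw:
  assumes "padic_valued_field p v pw"
  shows "pw r \<noteq> 0" "v (pw r) = r"
  using assms unfolding padic_valued_field_def by blast+

lemma valuation_one:
  assumes "padic_valued_field p v pw"
  shows "v 1 = 0"
  using valuation_mult[OF assms, of 1 1] by simp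

lemma valuation_uminus:
  assumes L: "padic_valued_field p v pw" and "x \<noteq> 0"
  shows "v (- x) = v x"
proof -
  have "v (-1) = 0"
    using valuation_mult[OF L, of "-1" "-1"] valuation_one[OF L] by simp
  then show ?thesis
    using valuation_mult[OF L, of "-1" x] assms by simp
qed

lemma valuation_power:
  assumes L: "padic_valued_field p v pw" and "x \<noteq> 0"
  shows "v (x ^ n) = of_nat n * v x"
  by (induction n) (use assms valuation_one[OF L] valuation_mult[OF L] in \<open>simp_all add: algebra_simps\<close>)

lemma valuation_of_nat_nonneg:
  assumes L: "padic_valued_field p v pw"
  shows "of_nat n \<noteq> (0 :: 'a :: field) \<Longrightarrow> 0 \<le> v (of_nat n :: 'a)"
proof (induction n)
  case (Suc n)
  show ?case
  proof (cases "of_nat n = (0 :: 'a)")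
    case True
    then show ?thesis using valuation_one[OF L] by simp
  next
    case False
    have "min (v (1 :: 'a)) (v (of_nat n)) \<le> v (1 + of_nat n :: 'a)"
      using valuation_add_ge_min[OF L _ False] Suc.prems by (simp add: add.commute)
    then show ?thesis
      using Suc.IH[OF False] valuation_one[OF L] by (simp add: add.commute)
  qed
qed simp

lemma valuation_sum_witness:
  assumes L: "padic_valued_field p v pw"
  shows "finite I \<Longrightarrow> sum f I \<noteq> 0 \<Longrightarrow> \<exists>i\<in>I. f i \<noteq> 0 \<and> v (f i) \<le> v (sum f I)"
proof (induction I rule: finite_induct)
  case (insert a I)
  show ?case
  proof (cases "f a = 0 \<or> sum f I = 0")
    case True
    then show ?thesis using insert by auto
  next
    case False
    then have "min (v (f a)) (v (sum f I)) \<le> v (f a + sum f I)"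
      using valuation_add_ge_min[OF L] insert by auto
    then show ?thesis
      using insert False by (cases "v (f a) \<le> v (sum f I)") force+
  qed
qed simp

lemma valuation_add_dominant:
  assumes L: "padic_valued_field p v pw" and x: "x \<noteq> 0" and y: "y \<noteq> 0 \<Longrightarrow> v x < v y"
  shows "x + y \<noteq> 0 \<and> v (x + y) = v x"
proof (cases "y = 0")
  case False
  have "x + y \<noteq> 0"
    using valuation_uminus[OF L x] y False by (metis add_eq_0_iff less_irrefl)
  moreover have "min (v (x + y)) (v (- y)) \<le> v x"
    using valuation_add_ge_min[OF L \<open>x + y \<noteq> 0\<close>, of "- y"] x False by simp
  ultimately show ?thesis
    using valuation_add_ge_min[OF L x False] valuation_uminus[OF L False] y False by auto
qed (use x in simp)

lemma valuation_sum_dominant: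
  assumes L: "padic_valued_field p v pw" and "finite I" "a \<in> I" "f a \<noteq> 0"
    and dom: "\<And>i. i \<in> I \<Longrightarrow> i \<noteq> a \<Longrightarrow> f i \<noteq> 0 \<Longrightarrow> v (f a) < v (f i)"
  shows "sum f I \<noteq> 0 \<and> v (sum f I) = v (f a)"
proof -
  have "v (f a) < v (sum f (I - {a}))" if "sum f (I - {a}) \<noteq> 0"
    using valuation_sum_witness[OF L, of "I - {a}" f] dom that \<open>finite I\<close> by force
  then show ?thesis
    using valuation_add_dominant[OF L \<open>f a \<noteq> 0\<close>] assms(2,3) by (simp add: sum.remove)
qed

lemma coeff_pcompose_linear:
  fixes Q :: "'a::comm_semiring_1 poly"
  shows "coeff (pcompose Q [:c, 1:]) i =
    (\<Sum>n\<le>degree Q. coeff Q n * (of_nat (n choose i) * c ^ (n - i)))"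
proof -
  have "coeff (pcompose Q [:c, 1:]) i = (\<Sum>n\<le>degree Q. coeff Q n * coeff ([:c, 1:] ^ n) i)"
    unfolding pcompose_altdef poly_altdef by (simp add: degree_map_poly coeff_map_poly coeff_sum)
  also have "\<dots> = (\<Sum>n\<le>degree Q. coeff Q n * (of_nat (n choose i) * c ^ (n - i)))"
  proof (intro sum.cong refl)
    fix n
    have "i > n \<Longrightarrow> coeff ([:c, 1:] ^ n) i = 0"
      using degree_power_le[of "[:c, 1:]" n] by (simp add: coeff_eq_0)
    then show "coeff Q n * coeff ([:c, 1:] ^ n) i = coeff Q n * (of_nat (n choose i) * c ^ (n - i))"
      by (cases "i \<le> n") (simp_all add: coeff_linear_poly_power binomial_eq_0)
  qed
  finally show ?thesis .
qed

lemma valuation_binomial_term: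
  assumes L: "padic_valued_field p v pw" and c: "c \<noteq> 0"
    and nz: "a * (of_nat (n choose i) * c ^ (n - i)) \<noteq> 0"
  shows "i \<le> n \<and> v a + of_nat (n - i) * v c \<le> v (a * (of_nat (n choose i) * c ^ (n - i)))"
proof -
  have a: "a \<noteq> 0" and b: "(of_nat (n choose i) :: 'a) \<noteq> 0"
    using nz by auto
  then have "i \<le> n"
    by (metis binomial_eq_0 not_le of_nat_0)
  moreover have "v (a * (of_nat (n choose i) * c ^ (n - i))) =
      v a + v (of_nat (n choose i) :: 'a) + of_nat (n - i) * v c"
    using valuation_mult[OF L] valuation_power[OF L c] a b c by simp
  ultimately show ?thesis
    using valuation_of_nat_nonneg[OF L b] by simp
qed

lemma valuation_shift_coeff_witness:
  fixes Q :: "'a::field poly"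
  assumes L: "padic_valued_field p v pw" and c: "c \<noteq> 0" and k: "k \<le> degree Q"
    and nz: "nc (pcompose Q [:c, 1:]) k \<noteq> 0"
  shows "\<exists>j\<le>k. nc Q j \<noteq> 0 \<and> v (nc Q j) + of_nat (k - j) * v c \<le> v (nc (pcompose Q [:c, 1:]) k)"
proof -
  define N where "N = degree Q"
  define f where "f n = coeff Q n * (of_nat (n choose (N - k)) * c ^ (n - (N - k)))" for n
  have deg: "degree (pcompose Q [:c, 1:]) = N"
    by (simp add: N_def degree_pcompose)
  have sum: "nc (pcompose Q [:c, 1:]) k = sum f {..N}"
    unfolding nc_def deg coeff_pcompose_linear f_def N_def ..
  obtain n where n: "n \<le> N" "f n \<noteq> 0" "v (f n) \<le> v (sum f {..N})"
    using valuation_sum_witness[OF L, of "{..N}" f] nz unfolding sum by auto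
  then have "N - k \<le> n" "v (coeff Q n) + of_nat (n - (N - k)) * v c \<le> v (f n)"
    using valuation_binomial_term[OF L c, of "coeff Q n" n "N - k"] unfolding f_def by auto
  moreover have "coeff Q n \<noteq> 0"
    using n(2) by (simp add: f_def)
  moreover have "nc Q (N - n) = coeff Q n" "n - (N - k) = k - (N - n)"
    using n k \<open>N - k \<le> n\<close> by (auto simp: nc_def N_def)
  ultimately show ?thesis
    using n(3) sum by (intro exI[of _ "N - n"]) auto
qed

lemma valuation_shift_coeff_dominant:
  fixes Q :: "'a::field poly"
  assumes L: "padic_valued_field p v pw" and c: "c \<noteq> 0" and k: "k \<le> degree Q"
    and nz: "nc Q k \<noteq> 0"
    and dom: "\<And>j. j < k \<Longrightarrow> nc Q j \<noteq> 0 \<Longrightarrow> v (nc Q k) < v (nc Q j) + of_nat (k - j) * v c"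
  shows "nc (pcompose Q [:c, 1:]) k \<noteq> 0 \<and> v (nc (pcompose Q [:c, 1:]) k) = v (nc Q k)"
proof -
  define N where "N = degree Q"
  define f where "f n = coeff Q n * (of_nat (n choose (N - k)) * c ^ (n - (N - k)))" for n
  have deg: "degree (pcompose Q [:c, 1:]) = N"
    by (simp add: N_def degree_pcompose)
  have sum: "nc (pcompose Q [:c, 1:]) k = sum f {..N}"
    unfolding nc_def deg coeff_pcompose_linear f_def N_def ..
  have fk: "f (N - k) = nc Q k"
    by (simp add: f_def nc_def N_def)
  have "sum f {..N} \<noteq> 0 \<and> v (sum f {..N}) = v (f (N - k))"
  proof (rule valuation_sum_dominant[OF L])
    fix n assume n: "n \<in> {..N}" "n \<noteq> N - k" "f n \<noteq> 0"
    then have "N - k \<le> n" "v (coeff Q n) + of_nat (n - (N - k)) * v c \<le> v (f n)"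
      using valuation_binomial_term[OF L c, of "coeff Q n" n "N - k"] unfolding f_def by auto
    moreover have "N - n < k" "nc Q (N - n) = coeff Q n" "n - (N - k) = k - (N - n)"
      using n k \<open>N - k \<le> n\<close> by (auto simp: nc_def N_def)
    moreover have "coeff Q n \<noteq> 0"
      using n(3) by (simp add: f_def)
    ultimately show "v (f (N - k)) < v (f n)"
      using dom[of "N - n"] fk by auto
  qed (use fk nz in auto)
  then show ?thesis
    using sum fk by simp
qed

lemma degree_pcompose_linear [simp]:
  fixes P :: "'a::idom poly"
  shows "degree (pcompose P [:c, 1:]) = degree P"
  by (simp add: degree_pcompose)

lemma nc_pcompose_linear_0 [simp]:
  fixes P :: "'a::idom poly"
  shows "nc (pcompose P [:c, 1:]) 0 = nc P 0"
  using lead_coeff_comp[of "[:c, 1:]" P] by (simp add: nc_def)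

lemma pcompose_linear_cancel:
  fixes P :: "'a::comm_ring_1 poly"
  shows "pcompose (pcompose P [:c, 1:]) [:- c, 1:] = P"
proof -
  have "pcompose [:c, 1:] [:- c, 1:] = [:0, 1:]"
    by (simp add: pcompose_pCons)
  then show ?thesis
    by (metis pcompose_assoc pcompose_idR)
qed

definition upper_hull :: "(real \<times> real) set \<Rightarrow> (real \<times> real) set" where
  "upper_hull T = {(x, y + t) | x y t. (x, y) \<in> convex hull T \<and> t \<ge> 0}"

lemma convex_hull_subset_upper_hull: "convex hull T \<subseteq> upper_hull T"
  unfolding upper_hull_def by force

lemma subset_upper_hull: "T \<subseteq> upper_hull T"
  using hull_subset[of T convex] convex_hull_subset_upper_hull by blast

lemma upper_hull_mono_snd:
  assumes "(x, y) \<in> upper_hull T" "y \<le> y'"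
  shows "(x, y') \<in> upper_hull T"
proof -
  obtain y0 t where "(x, y0) \<in> convex hull T" "t \<ge> 0" "y = y0 + t"
    using assms(1) unfolding upper_hull_def by blast
  then show ?thesis
    using assms(2) unfolding upper_hull_def
    by (intro CollectI exI[of _ x] exI[of _ y0] exI[of _ "y' - y0"]) auto
qed

lemma convex_upper_hull: "convex (upper_hull T)"
proof (rule convexI)
  fix a b :: "real \<times> real" and u w :: real
  assume "a \<in> upper_hull T" "b \<in> upper_hull T" and uw: "0 \<le> u" "0 \<le> w" "u + w = 1"
  then obtain ha ta hb tb where a: "a = ha + (0, ta)" "ha \<in> convex hull T" "ta \<ge> 0"
    and b: "b = hb + (0, tb)" "hb \<in> convex hull T" "tb \<ge> 0"
    unfolding upper_hull_def by force
  have "u *\<^sub>R ha + w *\<^sub>R hb \<in> convex hull T"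
    using a b uw by (intro convexD[OF convex_convex_hull]) auto
  moreover have "u *\<^sub>R a + w *\<^sub>R b = (u *\<^sub>R ha + w *\<^sub>R hb) + (0, u * ta + w * tb)"
    using a b by (simp add: algebra_simps)
  moreover have "u * ta + w * tb \<ge> 0"
    using a b uw by simp
  ultimately show "u *\<^sub>R a + w *\<^sub>R b \<in> upper_hull T"
    unfolding upper_hull_def by (cases "u *\<^sub>R ha + w *\<^sub>R hb") force
qed

lemma upper_hull_subset:
  assumes "A \<subseteq> upper_hull B"
  shows "upper_hull A \<subseteq> upper_hull B"
proof
  fix z assume "z \<in> upper_hull A"
  then obtain x y t where "z = (x, y + t)" "(x, y) \<in> convex hull A" "t \<ge> 0"
    unfolding upper_hull_def by blast
  moreover have "convex hull A \<subseteq> upper_hull B"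
    using assms convex_upper_hull by (rule hull_minimal)
  ultimately show "z \<in> upper_hull B"
    using upper_hull_mono_snd by fastforce
qed

lemma convex_hull_halfspace_ge:
  assumes "\<forall>z\<in>T. b \<le> inner c z" "z \<in> convex hull T"
  shows "b \<le> inner c z"
  using hull_minimal[of T "{z. b \<le> inner c z}" convex] convex_halfspace_ge[of b c] assms by auto

lemma convex_hull_point_between:
  fixes x x1 x2 y1 y2 :: real
  assumes "(x1, y1) \<in> T" "(x2, y2) \<in> T" "x1 \<le> x" "x \<le> x2"
  obtains l where "0 \<le> l" "l \<le> 1" "x - x1 = l * (x2 - x1)"
    "(x, y1 + l * (y2 - y1)) \<in> convex hull T"
proof -
  define l where "l = (if x1 = x2 then 0 else (x - x1) / (x2 - x1))"
  have l: "0 \<le> l" "l \<le> 1" "x - x1 = l * (x2 - x1)"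
    using assms(3,4) by (auto simp: l_def field_simps)
  have "(1 - l) *\<^sub>R (x1, y1) + l *\<^sub>R (x2, y2) \<in> convex hull T"
    using assms(1,2) l by (intro convexD_alt[OF convex_convex_hull] hull_inc)
  moreover have "(1 - l) *\<^sub>R (x1, y1) + l *\<^sub>R (x2, y2) = (x, y1 + l * (y2 - y1))"
    using l(3) by (simp add: algebra_simps)
  ultimately show ?thesis
    using l that by simp
qed

lemma upper_hull_above_chord:
  assumes "(j, yj) \<in> T" "(n, yn) \<in> T" "j \<le> x" "x \<le> n"
    and "yn \<le> yj + \<sigma> * (n - j)" "yj + \<sigma> * (x - j) \<le> y"
  shows "(x, y) \<in> upper_hull T"
proof -
  obtain l where l: "0 \<le> l" "x - j = l * (n - j)" "(x, yj + l * (yn - yj)) \<in> convex hull T"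
    using convex_hull_point_between[OF assms(1-4)] by metis
  have "l * (yn - yj) \<le> l * (\<sigma> * (n - j))"
    using l(1) assms(5) by (intro mult_left_mono) auto
  also have "\<dots> = \<sigma> * (x - j)"
    by (simp add: l(2) mult.left_commute)
  finally have "yj + l * (yn - yj) \<le> y"
    using assms(6) by linarith
  then show ?thesis
    using l(3) convex_hull_subset_upper_hull upper_hull_mono_snd by blast
qed

lemma extreme_point_of_upper_hull_lowest:
  assumes q: "q extreme_point_of upper_hull T" and y: "(fst q, y) \<in> upper_hull T"
  shows "snd q \<le> y"
proof (rule ccontr)
  assume "\<not> snd q \<le> y"
  then have "q = midpoint (fst q, y) (fst q, 2 * snd q - y)" "(fst q, y) \<noteq> (fst q, 2 * snd q - y)"
    by (auto simp: midpoint_def prod_eq_iff)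
  moreover have "(fst q, 2 * snd q - y) \<in> upper_hull T"
    using upper_hull_mono_snd[OF y] \<open>\<not> snd q \<le> y\<close> by simp
  ultimately have "q \<in> open_segment (fst q, y) (fst q, 2 * snd q - y)"
    by (metis midpoint_in_open_segment)
  then show False
    using q y \<open>(fst q, 2 * snd q - y) \<in> upper_hull T\<close> unfolding extreme_point_of_def by blast
qed

lemma extreme_point_of_upper_hull_not_above_chord:
  assumes q: "q extreme_point_of upper_hull T" and a: "a \<in> T" and b: "b \<in> T"
    and "fst a < fst q" "fst q < fst b"
    and "snd a \<le> snd q + \<sigma> * (fst a - fst q)" "snd b \<le> snd q + \<sigma> * (fst b - fst q)"
  shows False
proof -
  define l where "l = (fst q - fst a) / (fst b - fst a)"
  have l: "0 < l" "l < 1" "fst q - fst a = l * (fst b - fst a)"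
    using assms(4,5) by (auto simp: l_def field_simps)
  define h where "h = (1 - l) *\<^sub>R a + l *\<^sub>R b"
  have fst_h: "fst h = fst q"
    using l(3) by (simp add: h_def algebra_simps)
  have "(1 - l) * snd a + l * snd b \<le> (1 - l) * (snd q + \<sigma> * (fst a - fst q)) + l * (snd q + \<sigma> * (fst b - fst q))"
    using l assms(6,7) by (intro add_mono mult_left_mono) auto
  also have "\<dots> = snd q + \<sigma> * ((1 - l) * (fst a - fst q) + l * (fst b - fst q))"
    by (simp add: algebra_simps)
  also have "\<dots> = snd q + \<sigma> * ((fst a - fst q) + l * (fst b - fst a))"
    by (simp add: algebra_simps)
  also have "\<dots> = snd q"
    using l(3) by simp
  finally have "snd h \<le> snd q"
    by (simp add: h_def)
  moreover have "h \<in> convex hull T"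
    unfolding h_def using a b l by (intro convexD_alt[OF convex_convex_hull] hull_inc) auto
  then have "(fst q, snd h) \<in> upper_hull T"
    using convex_hull_subset_upper_hull by (auto simp flip: fst_h)
  then have "snd q \<le> snd h"
    by (rule extreme_point_of_upper_hull_lowest[OF q])
  ultimately have "q = (1 - l) *\<^sub>R a + l *\<^sub>R b"
    using fst_h by (simp add: prod_eq_iff h_def)
  moreover have "a \<noteq> b"
    using assms(4,5) by auto
  ultimately have "q \<in> open_segment a b"
    using l(1,2) unfolding in_segment by blast
  moreover have "a \<in> upper_hull T" "b \<in> upper_hull T"
    using a b subset_upper_hull by auto
  ultimately show False
    using q by (simp add: extreme_point_of_def)
qed

lemma convex_hull_strict_min_unique:
  assumes q: "q \<in> T" and strict_min: "\<forall>z\<in>T - {q}. inner c q < inner c z"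
    and h: "h \<in> convex hull T"
  shows "inner c q \<le> inner c h \<and> (inner c h = inner c q \<longrightarrow> h = q)"
proof (cases "T - {q} = {}")
  case True
  then have "T = {q}"
    using q by auto
  then show ?thesis
    using h by simp
next
  case False
  have "h \<in> convex hull (insert q (T - {q}))"
    using h q by (simp add: insert_absorb)
  then obtain u w b where uw: "0 \<le> w" "u + w = 1" and b: "b \<in> convex hull (T - {q})"
    and h: "h = u *\<^sub>R q + w *\<^sub>R b"
    unfolding convex_hull_insert[OF False] by blast
  have cb: "inner c q < inner c b"
    using b strict_min hull_minimal[of "T - {q}" "{z. inner c q < inner c z}" convex]
      convex_halfspace_gt[of "inner c q" c] by auto
  have "inner c h = (u + w) * inner c q + w * (inner c b - inner c q)"
    by (simp add: h inner_add_right algebra_simps)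
  then have ch: "inner c h = inner c q + w * (inner c b - inner c q)"
    using uw(2) by simp
  have "w * (inner c b - inner c q) = 0 \<Longrightarrow> h = q"
    using cb uw(2) by (simp add: h)
  then show ?thesis
    using ch cb uw(1) by simp
qed

lemma extreme_point_of_upper_hull_min:
  assumes q: "q \<in> T" and up: "0 < snd c" and strict_min: "\<forall>z\<in>T - {q}. inner c q < inner c z"
  shows "q extreme_point_of upper_hull T"
proof -
  have upper_min: "inner c q \<le> inner c z \<and> (inner c z = inner c q \<longrightarrow> z = q)"
    if zT: "z \<in> upper_hull T" for z
  proof -
    obtain x y t where z: "z = (x, y + t)" "(x, y) \<in> convex hull T" "t \<ge> 0"
      using zT unfolding upper_hull_def by blast
    have "inner c z = inner c (x, y) + snd c * t"
      by (cases c) (simp add: z(1) algebra_simps)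
    moreover have "0 \<le> snd c * t" "snd c * t = 0 \<longleftrightarrow> t = 0"
      using up z(3) by auto
    ultimately show ?thesis
      using convex_hull_strict_min_unique[OF q strict_min z(2)] z(1) by auto
  qed
  have "upper_hull T \<inter> {z. inner c z = inner c q} face_of upper_hull T"
    using upper_min by (intro face_of_Int_supporting_hyperplane_ge convex_upper_hull) auto
  moreover have "upper_hull T \<inter> {z. inner c z = inner c q} = {q}"
    using upper_min q subset_upper_hull by blast
  ultimately show ?thesis
    by (simp add: face_of_singleton)
qed

lemma extreme_point_of_upper_hull_lex_min:
  assumes "finite T" and q: "q \<in> T"
    and up: "0 \<le> snd c" "0 \<le> snd d" "0 < snd c + snd d"
    and lex: "\<forall>z\<in>T - {q}. inner c q < inner c z \<or> (inner c z = inner c q \<and> inner d q < inner d z)"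
  shows "q extreme_point_of upper_hull T"
proof -
  \<comment> \<open>For small \<open>\<epsilon> > 0\<close> the lexicographic minimum becomes a strict minimum of \<open>c + \<epsilon> d\<close>.\<close>
  have "\<forall>\<^sub>F \<epsilon> in at_right 0. inner (c + \<epsilon> *\<^sub>R d) q < inner (c + \<epsilon> *\<^sub>R d) z"
    if z: "z \<in> T - {q}" for z
  proof -
    have expand: "inner (c + \<epsilon> *\<^sub>R d) z - inner (c + \<epsilon> *\<^sub>R d) q =
        (inner c z - inner c q) + \<epsilon> * (inner d z - inner d q)" for \<epsilon>
      by (simp add: inner_add_left algebra_simps)
    show ?thesis
    proof (cases "inner c q < inner c z")
      case True
      have "((\<lambda>\<epsilon>. (inner c z - inner c q) + \<epsilon> * (inner d z - inner d q))
          \<longlongrightarrow> inner c z - inner c q) (at_right 0)"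
        by (auto intro!: tendsto_eq_intros)
      then have "\<forall>\<^sub>F \<epsilon> in at_right 0. 0 < (inner c z - inner c q) + \<epsilon> * (inner d z - inner d q)"
        using True by (intro order_tendstoD(1)) auto
      then show ?thesis
        by (rule eventually_mono) (metis expand diff_gt_0_iff_gt)
    next
      case False
      then have "inner c z = inner c q" "inner d q < inner d z"
        using lex z by auto
      then have "inner (c + \<epsilon> *\<^sub>R d) q < inner (c + \<epsilon> *\<^sub>R d) z" if "0 < \<epsilon>" for \<epsilon>
        using expand[of \<epsilon>] mult_pos_pos[OF that, of "inner d z - inner d q"] by simp
      then show ?thesis
        using eventually_at_right_less[of "0::real"] by (auto elim: eventually_mono)
    qed
  qed
  then have "\<forall>\<^sub>F \<epsilon> in at_right 0. \<forall>z\<in>T - {q}. inner (c + \<epsilon> *\<^sub>R d) q < inner (c + \<epsilon> *\<^sub>R d) z"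
    using \<open>finite T\<close> by (intro eventually_ball_finite) auto
  then have "\<forall>\<^sub>F \<epsilon> in at_right 0. 0 < \<epsilon> \<and> (\<forall>z\<in>T - {q}. inner (c + \<epsilon> *\<^sub>R d) q < inner (c + \<epsilon> *\<^sub>R d) z)"
    by (intro eventually_conj eventually_at_right_less)
  then obtain \<epsilon> where \<epsilon>: "0 < \<epsilon>" "\<forall>z\<in>T - {q}. inner (c + \<epsilon> *\<^sub>R d) q < inner (c + \<epsilon> *\<^sub>R d) z"
    using eventually_happens'[OF trivial_limit_at_right_real] by blast
  have "0 < snd c + \<epsilon> * snd d"
    using up \<epsilon>(1) by (cases "snd c = 0") (auto intro: add_pos_nonneg)
  then show ?thesis
    using extreme_point_of_upper_hull_min[OF q _ \<epsilon>(2)] by simp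
qed

lemma ex_lex_min:
  fixes f :: "'a \<Rightarrow> 'b::linorder" and g :: "'a \<Rightarrow> 'c::linorder"
  assumes "finite A" "A \<noteq> {}"
  shows "\<exists>w\<in>A. \<forall>z\<in>A. f w < f z \<or> (f z = f w \<and> g z \<le> g w)"
proof -
  define B where "B = {z \<in> A. f z = Min (f ` A)}"
  have "Min (f ` A) \<in> f ` A"
    using assms by (intro Min_in) auto
  then have "finite B" "B \<noteq> {}"
    using assms(1) by (auto simp: B_def)
  then have "Max (g ` B) \<in> g ` B"
    by (intro Max_in) auto
  then obtain w where w: "w \<in> B" "g w = Max (g ` B)"
    by auto
  have "f w < f z \<or> (f z = f w \<and> g z \<le> g w)" if "z \<in> A" for z
  proof (cases "z \<in> B")
    case True
    then show ?thesis using w \<open>finite B\<close> by (auto simp: B_def)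
  next
    case False
    moreover have "Min (f ` A) \<le> f z"
      using assms(1) that by (intro Min_le) auto
    ultimately show ?thesis
      using w that by (auto simp: B_def)
  qed
  moreover have "w \<in> A"
    using w(1) by (simp add: B_def)
  ultimately show ?thesis
    by blast
qed

lemma convex_combination_left_of_supporting_point:
  fixes a b q :: "real \<times> real"
  assumes a: "fst a \<le> fst q" "snd q + \<sigma> * (fst a - fst q) \<le> snd a"
    and b: "fst q \<le> fst b" "snd q + \<sigma> * (fst b - fst q) \<le> snd b"
    and uv: "0 \<le> u" "0 \<le> v" "u + v = 1"
    and left: "fst (u *\<^sub>R a + v *\<^sub>R b) \<le> fst q"
  obtains l where "0 \<le> l" "l \<le> 1" "fst (l *\<^sub>R a + (1 - l) *\<^sub>R q) = fst (u *\<^sub>R a + v *\<^sub>R b)"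
    "snd (l *\<^sub>R a + (1 - l) *\<^sub>R q) \<le> snd (u *\<^sub>R a + v *\<^sub>R b)"
proof -
  define z where "z = u *\<^sub>R a + v *\<^sub>R b"
  define c :: "real \<times> real" where "c = (- \<sigma>, 1)"
  have c: "inner c w = snd w - \<sigma> * fst w" for w
    by (simp add: c_def inner_prod_def)
  have ab_above: "inner c q \<le> inner c a" "inner c q \<le> inner c b"
    using a(2) b(2) by (simp_all add: c right_diff_distrib)
  have u: "u = 1 - v"
    using uv(3) by simp
  have fst_z: "fst q - fst z = u * (fst q - fst a) - v * (fst b - fst q)"
    by (simp add: z_def u algebra_simps)
  obtain l where l: "0 \<le> l" "l \<le> u" "l * (fst q - fst a) = fst q - fst z"
  proof (cases "fst a = fst q")
    case True
    then have "fst z = fst q"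
      using fst_z left mult_nonneg_nonneg[OF uv(2), of "fst b - fst q"] b(1) by (simp add: z_def)
    then show ?thesis
      using that[of 0] uv True by simp
  next
    case False
    have "fst q - fst z \<le> u * (fst q - fst a)"
      using fst_z uv(2) b(1) by (simp add: mult_nonneg_nonneg)
    then show ?thesis
      using that[of "(fst q - fst z) / (fst q - fst a)"] False a(1) left
      by (simp add: z_def field_simps)
  qed
  define y where "y = l *\<^sub>R a + (1 - l) *\<^sub>R q"
  have "fst y = fst z"
    using l(3) by (simp add: y_def algebra_simps)
  moreover have "snd y \<le> snd z"
  proof -
    have "inner c y - inner c q = l * (inner c a - inner c q)"
      by (simp add: y_def inner_add_right algebra_simps)
    also have "\<dots> \<le> u * (inner c a - inner c q) + v * (inner c b - inner c q)"
      using l ab_above uv by (intro add_increasing2 mult_right_mono mult_nonneg_nonneg) auto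
    also have "\<dots> = inner c z - inner c q"
      by (simp add: z_def u inner_add_right algebra_simps)
    finally show ?thesis
      using \<open>fst y = fst z\<close> by (simp add: c)
  qed
  ultimately show ?thesis
    using that[of l] l uv by (simp add: y_def z_def)
qed

lemma convex_hull_left_of_supporting_point:
  assumes q: "q \<in> T" and line: "\<forall>z\<in>T. snd q + \<sigma> * (fst z - fst q) \<le> snd z"
    and z: "z \<in> convex hull T" and left: "fst z \<le> fst q"
  shows "z \<in> upper_hull {w \<in> T. fst w \<le> fst q}"
proof -
  define A where "A = {w \<in> T. fst w \<le> fst q}"
  define B where "B = {w \<in> T. fst q \<le> fst w}"
  have "q \<in> A" "q \<in> B"
    using q by (auto simp: A_def B_def)
  have "T = A \<union> B"
    by (auto simp: A_def B_def)
  then have "convex hull T \<subseteq> convex hull (convex hull A \<union> convex hull B)"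
    by (intro hull_mono) (use hull_subset[of A convex] hull_subset[of B convex] in auto)
  also have "\<dots> = {u *\<^sub>R a + v *\<^sub>R b | u v a b. u \<ge> 0 \<and> v \<ge> 0 \<and> u + v = 1 \<and>
      a \<in> convex hull A \<and> b \<in> convex hull B}"
    using \<open>q \<in> A\<close> \<open>q \<in> B\<close> by (intro convex_hull_union_two) auto
  finally obtain u v a b where uv: "u \<ge> 0" "v \<ge> 0" "u + v = 1"
    and a: "a \<in> convex hull A" and b: "b \<in> convex hull B" and z_eq: "z = u *\<^sub>R a + v *\<^sub>R b"
    using z by blast
  have line_hull: "snd q + \<sigma> * (fst w - fst q) \<le> snd w" if "w \<in> convex hull T" for w
    using convex_hull_halfspace_ge[OF _ that, of "snd q - \<sigma> * fst q" "(- \<sigma>, 1)"] line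
    by (auto simp: inner_prod_def algebra_simps)
  have "A \<subseteq> T" "B \<subseteq> T"
    by (auto simp: A_def B_def)
  then have a_line: "snd q + \<sigma> * (fst a - fst q) \<le> snd a"
    and b_line: "snd q + \<sigma> * (fst b - fst q) \<le> snd b"
    using a b line_hull hull_mono by blast+
  have fst_a: "fst a \<le> fst q"
    using convex_hull_halfspace_ge[OF _ a, of "- fst q" "(-1, 0)"] by (auto simp: A_def inner_prod_def)
  have fst_b: "fst q \<le> fst b"
    using convex_hull_halfspace_ge[OF _ b, of "fst q" "(1, 0)"] by (auto simp: B_def inner_prod_def)
  obtain l where l: "0 \<le> l" "l \<le> 1" "fst (l *\<^sub>R a + (1 - l) *\<^sub>R q) = fst z"
    "snd (l *\<^sub>R a + (1 - l) *\<^sub>R q) \<le> snd z"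
    using convex_combination_left_of_supporting_point[OF fst_a a_line fst_b b_line uv] left
    unfolding z_eq by blast
  define y where "y = l *\<^sub>R a + (1 - l) *\<^sub>R q"
  have "y \<in> convex hull A"
    using a \<open>q \<in> A\<close> l unfolding y_def by (intro convexD[OF convex_convex_hull]) (auto intro: hull_inc)
  moreover have "(fst z, snd y) = y"
    using l(3) by (simp add: prod_eq_iff y_def)
  ultimately have "(fst z, snd y) \<in> upper_hull A"
    using convex_hull_subset_upper_hull by auto
  then have "(fst z, snd z) \<in> upper_hull A"
    by (rule upper_hull_mono_snd) (use l(4) in \<open>simp add: y_def\<close>)
  then show ?thesis
    by (simp add: A_def)
qed

lemma extreme_point_of_upper_hull_rightmost_min:
  assumes "finite T" "inj_on fst T" and w: "w \<in> T"
    and min: "\<forall>z\<in>T. snd w - \<sigma> * fst w < snd z - \<sigma> * fst z \<or>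
      (snd z - \<sigma> * fst z = snd w - \<sigma> * fst w \<and> fst z \<le> fst w)"
  shows "w extreme_point_of upper_hull T"
proof (rule extreme_point_of_upper_hull_lex_min[where c = "(- \<sigma>, 1)" and d = "(-1, 0)"])
  show "\<forall>z\<in>T - {w}. inner (- \<sigma>, 1) w < inner (- \<sigma>, 1) z \<or>
      (inner (- \<sigma>, 1) z = inner (- \<sigma>, 1) w \<and> inner (-1, 0) w < inner (-1, 0) z)"
  proof
    fix z assume z: "z \<in> T - {w}"
    then have "fst z \<noteq> fst w"
      using \<open>inj_on fst T\<close> w by (auto dest: inj_onD)
    then show "inner (- \<sigma>, 1) w < inner (- \<sigma>, 1) z \<or>
        (inner (- \<sigma>, 1) z = inner (- \<sigma>, 1) w \<and> inner (-1, 0) w < inner (-1, 0) z)"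
      using min z by (auto simp: inner_prod_def algebra_simps)
  qed
qed (use assms in auto)

lemma last_edge_supporting:
  assumes "finite T" "inj_on fst T"
    and q: "q extreme_point_of upper_hull T"
    and r: "r \<in> T" "fst q < fst r" "snd r = snd q + \<sigma> * (fst r - fst q)"
    and right: "\<forall>z\<in>T. fst z \<le> fst r"
    and last: "\<forall>z\<in>T. z extreme_point_of upper_hull T \<longrightarrow> fst z < fst r \<longrightarrow> fst z \<le> fst q"
  shows "\<forall>z\<in>T. snd q + \<sigma> * (fst z - fst q) \<le> snd z"
proof (rule ccontr)
  define \<phi> where "\<phi> z = snd z - \<sigma> * fst z" for z :: "real \<times> real"
  assume "\<not> (\<forall>z\<in>T. snd q + \<sigma> * (fst z - fst q) \<le> snd z)"
  then obtain z0 where "z0 \<in> T" "\<phi> z0 < \<phi> q"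
    by (auto simp: \<phi>_def algebra_simps)
  \<comment> \<open>A lowest point below the line, ties broken to the right, would be a vertex strictly
    between q and r.\<close>
  obtain w where w: "w \<in> T" "\<forall>z\<in>T. \<phi> w < \<phi> z \<or> (\<phi> z = \<phi> w \<and> fst z \<le> fst w)"
    using ex_lex_min[of T \<phi> fst] \<open>finite T\<close> r(1) by blast
  have "\<phi> w < \<phi> q"
    using w(2) \<open>z0 \<in> T\<close> \<open>\<phi> z0 < \<phi> q\<close> by fastforce
  consider "fst w < fst q" | "fst w = fst q" | "fst q < fst w"
    by linarith
  then show False
  proof cases
    case 1
    have "snd w \<le> snd q + \<sigma> * (fst w - fst q)"
      using \<open>\<phi> w < \<phi> q\<close> by (simp add: \<phi>_def right_diff_distrib)
    moreover have "snd r \<le> snd q + \<sigma> * (fst r - fst q)"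
      using r(3) by linarith
    ultimately show False
      by (rule extreme_point_of_upper_hull_not_above_chord[OF q w(1) r(1) 1 r(2)])
  next
    case 2
    have "(fst q, snd w) \<in> upper_hull T"
      using w(1) subset_upper_hull by (auto simp flip: 2)
    then have "snd q \<le> snd w"
      by (rule extreme_point_of_upper_hull_lowest[OF q])
    then show False
      using \<open>\<phi> w < \<phi> q\<close> 2 by (simp add: \<phi>_def)
  next
    case 3
    have "w extreme_point_of upper_hull T"
      using extreme_point_of_upper_hull_rightmost_min[OF assms(1,2) w(1)] w(2) by (simp add: \<phi>_def)
    moreover have "w \<noteq> r"
      using \<open>\<phi> w < \<phi> q\<close> r(3) by (auto simp: \<phi>_def right_diff_distrib)
    then have "fst w < fst r"
      using right w(1) r(1) \<open>inj_on fst T\<close> by (metis inj_onD order_less_le)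
    ultimately show False
      using last w(1) 3 by force
  qed
qed

definition np_point :: "('a::field \<Rightarrow> rat) \<Rightarrow> 'a poly \<Rightarrow> nat \<Rightarrow> real \<times> real" where
  "np_point v P k = (real k, real_of_rat (v (nc P k)))"

lemma np_points_eq: "np_points v P = np_point v P ` {k. k \<le> degree P \<and> nc P k \<noteq> 0}"
  unfolding np_points_def np_point_def by auto

lemma np_point_in_np_points_iff: "np_point v P k \<in> np_points v P \<longleftrightarrow> k \<le> degree P \<and> nc P k \<noteq> 0"
  by (auto simp: np_points_eq np_point_def)

lemma finite_np_points: "finite (np_points v P)"
  by (simp add: np_points_eq)

lemma inj_on_fst_np_points: "inj_on fst (np_points v P)"
  by (auto simp: np_points_eq np_point_def inj_on_def)

lemma np_breakpoint_iff:
  "np_breakpoint v P k \<longleftrightarrow>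
     np_point v P k \<in> np_points v P \<and> np_point v P k extreme_point_of upper_hull (np_points v P)"
  using np_point_in_np_points_iff[of v P k]
  unfolding np_breakpoint_def upper_hull_def np_point_def by blast

lemma np_breakpoint_0:
  assumes "nc P 0 \<noteq> 0"
  shows "np_breakpoint v P 0"
proof -
  have "np_point v P 0 extreme_point_of upper_hull (np_points v P)"
  proof (rule extreme_point_of_upper_hull_lex_min[where c = "(1, 0)" and d = "(0, 1)"])
    show "np_point v P 0 \<in> np_points v P"
      using assms by (simp add: np_point_in_np_points_iff)
    show "\<forall>z\<in>np_points v P - {np_point v P 0}. inner (1, 0) (np_point v P 0) < inner (1, 0) z \<or>
        (inner (1, 0) z = inner (1, 0) (np_point v P 0) \<and> inner (0, 1) (np_point v P 0) < inner (0, 1) z)"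
      by (auto simp: np_points_eq np_point_def)
  qed (auto simp: finite_np_points)
  then show ?thesis
    using assms by (simp add: np_breakpoint_iff np_point_in_np_points_iff)
qed

lemma
  assumes "1 \<le> degree P" "nc P 0 \<noteq> 0"
  shows m_max_breakpoint: "np_breakpoint v P (m_max v P)"
    and m_max_less_degree: "m_max v P < degree P"
    and m_max_greatest: "\<And>k. np_breakpoint v P k \<Longrightarrow> k < degree P \<Longrightarrow> k \<le> m_max v P"
proof -
  define B where "B = {k. np_breakpoint v P k \<and> k < degree P}"
  have "finite B"
    by (rule finite_subset[of _ "{..<degree P}"]) (auto simp: B_def)
  moreover have "0 \<in> B"
    using assms np_breakpoint_0 by (auto simp: B_def)
  ultimately have "m_max v P \<in> B" "\<And>k. k \<in> B \<Longrightarrow> k \<le> m_max v P"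
    unfolding m_max_def B_def[symmetric] by (auto intro: Max_in)
  then show "np_breakpoint v P (m_max v P)" "m_max v P < degree P"
    "\<And>k. np_breakpoint v P k \<Longrightarrow> k < degree P \<Longrightarrow> k \<le> m_max v P"
    by (auto simp: B_def)
qed

lemma of_rat_add_of_nat_mult_le:
  assumes "a + of_nat (k - j) * s \<le> b" "j \<le> k"
  shows "real_of_rat a + real_of_rat s * (real k - real j) \<le> real_of_rat b"
proof -
  have "real_of_rat (a + of_nat (k - j) * s) \<le> real_of_rat b"
    using assms(1) by (simp only: of_rat_less_eq)
  then show ?thesis
    using assms(2) by (simp add: of_rat_add of_rat_mult of_rat_diff of_nat_diff mult.commute)
qed

definition last_edge :: "('a::field \<Rightarrow> rat) \<Rightarrow> 'a poly \<Rightarrow> nat \<Rightarrow> rat" where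
  "last_edge v P k = v (nc P (m_max v P)) + s_max v P * (of_nat k - of_nat (m_max v P))"

lemma last_edge_add:
  "j \<le> k \<Longrightarrow> last_edge v P j + of_nat (k - j) * s_max v P = last_edge v P k"
  by (simp add: last_edge_def of_nat_diff algebra_simps)

lemma last_edge_degree:
  assumes "m_max v P < degree P"
  shows "last_edge v P (degree P) = v (nc P (degree P))"
  using assms by (simp add: last_edge_def s_max_def of_nat_diff)

lemma of_rat_last_edge:
  "real_of_rat (last_edge v P k) =
     snd (np_point v P (m_max v P)) + real_of_rat (s_max v P) * (real k - real (m_max v P))"
  by (simp add: last_edge_def np_point_def of_rat_add of_rat_mult of_rat_diff)

lemma np_points_above_last_edge:
  assumes N: "1 \<le> degree P" and a0: "nc P 0 \<noteq> 0" and aN: "nc P (degree P) \<noteq> 0"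
  shows "\<forall>z\<in>np_points v P.
    snd (np_point v P (m_max v P)) + real_of_rat (s_max v P) * (fst z - real (m_max v P)) \<le> snd z"
proof -
  define M where "M = m_max v P"
  have M: "M < degree P"
    using m_max_less_degree[OF N a0] by (simp add: M_def)
  have "\<forall>z\<in>np_points v P. snd (np_point v P M) + real_of_rat (s_max v P) * (fst z - fst (np_point v P M)) \<le> snd z"
  proof (rule last_edge_supporting[OF finite_np_points inj_on_fst_np_points])
    show "np_point v P M extreme_point_of upper_hull (np_points v P)"
      using m_max_breakpoint[OF N a0] by (simp add: M_def np_breakpoint_iff)
    show "np_point v P (degree P) \<in> np_points v P"
      using aN by (simp add: np_point_in_np_points_iff)
    show "snd (np_point v P (degree P)) = snd (np_point v P M) +
        real_of_rat (s_max v P) * (fst (np_point v P (degree P)) - fst (np_point v P M))"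
      using of_rat_last_edge[of v P "degree P"] last_edge_degree[OF M[unfolded M_def]]
      by (simp add: M_def np_point_def)
    show "\<forall>z\<in>np_points v P. fst z \<le> fst (np_point v P (degree P))"
      by (auto simp: np_points_eq np_point_def)
    show "\<forall>z\<in>np_points v P. z extreme_point_of upper_hull (np_points v P) \<longrightarrow>
        fst z < fst (np_point v P (degree P)) \<longrightarrow> fst z \<le> fst (np_point v P M)"
      using m_max_greatest[OF N a0] by (auto simp: np_points_eq np_breakpoint_iff M_def np_point_def)
  qed (use M in \<open>simp add: np_point_def\<close>)
  then show ?thesis
    by (simp add: M_def np_point_def)
qed

lemma last_edge_le_valuation:
  assumes N: "1 \<le> degree P" and a0: "nc P 0 \<noteq> 0" and aN: "nc P (degree P) \<noteq> 0"
    and k: "k \<le> degree P" "nc P k \<noteq> 0"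
  shows "last_edge v P k \<le> v (nc P k)"
proof -
  have "real_of_rat (last_edge v P k) \<le> real_of_rat (v (nc P k))"
    using np_points_above_last_edge[OF N a0 aN, of v] k
    by (auto simp: of_rat_last_edge np_points_eq np_point_def)
  then show ?thesis
    by (simp add: of_rat_less_eq)
qed

lemma last_edge_less_valuation:
  assumes N: "1 \<le> degree P" and a0: "nc P 0 \<noteq> 0" and aN: "nc P (degree P) \<noteq> 0"
    and k: "k < m_max v P" "nc P k \<noteq> 0"
  shows "last_edge v P k < v (nc P k)"
proof (rule ccontr)
  define M where "M = m_max v P"
  define \<sigma> where "\<sigma> = real_of_rat (s_max v P)"
  assume "\<not> last_edge v P k < v (nc P k)"
  then have "real_of_rat (v (nc P k)) \<le> real_of_rat (last_edge v P k)"
    by (simp add: of_rat_less_eq)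
  then have "snd (np_point v P k) \<le> snd (np_point v P M) + \<sigma> * (fst (np_point v P k) - fst (np_point v P M))"
    by (simp add: of_rat_last_edge M_def \<sigma>_def np_point_def)
  moreover have "snd (np_point v P (degree P)) \<le>
      snd (np_point v P M) + \<sigma> * (fst (np_point v P (degree P)) - fst (np_point v P M))"
    using of_rat_last_edge[of v P "degree P"] last_edge_degree[OF m_max_less_degree[OF N a0]]
    by (simp add: M_def \<sigma>_def np_point_def)
  moreover have "np_point v P M extreme_point_of upper_hull (np_points v P)"
    using m_max_breakpoint[OF N a0] by (simp add: M_def np_breakpoint_iff)
  moreover have "np_point v P k \<in> np_points v P" "np_point v P (degree P) \<in> np_points v P"
    using k aN m_max_less_degree[OF N a0, of v] by (simp_all add: np_point_in_np_points_iff)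
  moreover have "fst (np_point v P k) < fst (np_point v P M)" "fst (np_point v P M) < fst (np_point v P (degree P))"
    using k m_max_less_degree[OF N a0] by (simp_all add: np_point_def M_def)
  ultimately show False
    using extreme_point_of_upper_hull_not_above_chord by blast
qed

lemma last_edge_le_valuation_shift:
  fixes P :: "'a::field poly"
  assumes L: "padic_valued_field p v pw"
    and N: "1 \<le> degree P" and a0: "nc P 0 \<noteq> 0" and aN: "nc P (degree P) \<noteq> 0"
    and c: "c \<noteq> 0" "v c = s_max v P"
    and k: "k \<le> degree P" "nc (pcompose P [:c, 1:]) k \<noteq> 0"
  shows "last_edge v P k \<le> v (nc (pcompose P [:c, 1:]) k)"
proof -
  obtain j where j: "j \<le> k" "nc P j \<noteq> 0"
    "v (nc P j) + of_nat (k - j) * v c \<le> v (nc (pcompose P [:c, 1:]) k)"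
    using valuation_shift_coeff_witness[OF L c(1) k] by blast
  have "last_edge v P j \<le> v (nc P j)"
    using last_edge_le_valuation[OF N a0 aN _ j(2)] j(1) k(1) by simp
  then show ?thesis
    using j(3) last_edge_add[OF j(1), of v P] c(2) by simp
qed

lemma valuation_shift_coeff_m_max:
  fixes P :: "'a::field poly"
  assumes L: "padic_valued_field p v pw"
    and N: "1 \<le> degree P" and a0: "nc P 0 \<noteq> 0" and aN: "nc P (degree P) \<noteq> 0"
    and c: "c \<noteq> 0" "v c = s_max v P"
  shows "nc (pcompose P [:c, 1:]) (m_max v P) \<noteq> 0 \<and>
    v (nc (pcompose P [:c, 1:]) (m_max v P)) = v (nc P (m_max v P))"
proof (rule valuation_shift_coeff_dominant[OF L c(1)])
  show "m_max v P \<le> degree P"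
    using m_max_less_degree[OF N a0, of v] by simp
  show "nc P (m_max v P) \<noteq> 0"
    using m_max_breakpoint[OF N a0] by (simp add: np_breakpoint_def)
next
  fix j assume j: "j < m_max v P" "nc P j \<noteq> 0"
  have "v (nc P (m_max v P)) = last_edge v P j + of_nat (m_max v P - j) * s_max v P"
    using last_edge_add[of j "m_max v P" v P] j(1) by (simp add: last_edge_def)
  then show "v (nc P (m_max v P)) < v (nc P j) + of_nat (m_max v P - j) * v c"
    using last_edge_less_valuation[OF N a0 aN j] c(2) by simp
qed

lemma np_points_shift_subset_upper_hull:
  fixes P :: "'a::field poly"
  assumes L: "padic_valued_field p v pw"
    and N: "1 \<le> degree P" and a0: "nc P 0 \<noteq> 0" and aN: "nc P (degree P) \<noteq> 0"
    and c: "c \<noteq> 0" "v c = s_max v P"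
  shows "np_points v (pcompose P [:c, 1:]) \<subseteq> upper_hull (np_points v P)"
proof
  fix z assume "z \<in> np_points v (pcompose P [:c, 1:])"
  then obtain k where k: "k \<le> degree P" "nc (pcompose P [:c, 1:]) k \<noteq> 0"
    and z: "z = np_point v (pcompose P [:c, 1:]) k"
    by (auto simp: np_points_eq)
  obtain j where j: "j \<le> k" "nc P j \<noteq> 0"
    "v (nc P j) + of_nat (k - j) * v c \<le> v (nc (pcompose P [:c, 1:]) k)"
    using valuation_shift_coeff_witness[OF L c(1) k] by blast
  define \<sigma> where "\<sigma> = real_of_rat (s_max v P)"
  define Y where "Y i = real_of_rat (v (nc P i))" for i
  have "real_of_rat (last_edge v P j) \<le> Y j"
    using last_edge_le_valuation[OF N a0 aN _ j(2)] j(1) k(1) by (simp add: Y_def of_rat_less_eq)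
  moreover have "Y (degree P) = real_of_rat (last_edge v P j) + \<sigma> * (real (degree P) - real j)"
    using last_edge_degree[OF m_max_less_degree[OF N a0]] of_rat_last_edge[of v P j]
      of_rat_last_edge[of v P "degree P"]
    by (simp add: Y_def \<sigma>_def algebra_simps)
  ultimately have "Y (degree P) \<le> Y j + \<sigma> * (real (degree P) - real j)"
    by linarith
  moreover have "Y j + \<sigma> * (real k - real j) \<le> snd z"
    using of_rat_add_of_nat_mult_le[OF j(3) j(1)] c(2) by (simp add: z Y_def \<sigma>_def np_point_def)
  ultimately have "(real k, snd z) \<in> upper_hull (np_points v P)"
    using j k aN by (intro upper_hull_above_chord[where \<sigma> = \<sigma>])
      (auto simp: np_points_eq np_point_def Y_def)
  then show "z \<in> upper_hull (np_points v P)"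
    by (simp add: z np_point_def)
qed

lemma np_points_left_subset_upper_hull_shift:
  fixes P :: "'a::field poly"
  assumes L: "padic_valued_field p v pw"
    and N: "1 \<le> degree P" and a0: "nc P 0 \<noteq> 0" and aN: "nc P (degree P) \<noteq> 0"
    and c: "c \<noteq> 0" "v c = s_max v P"
  shows "{z \<in> np_points v P. fst z \<le> real (m_max v P)} \<subseteq> upper_hull (np_points v (pcompose P [:c, 1:]))"
proof
  define M where "M = m_max v P"
  define Pc where "Pc = pcompose P [:c, 1:]"
  fix z assume "z \<in> {z \<in> np_points v P. fst z \<le> real (m_max v P)}"
  then obtain k where k: "k \<le> degree P" "nc P k \<noteq> 0" "k \<le> M" and z: "z = np_point v P k"
    by (auto simp: np_points_eq np_point_def M_def)
  have "- c \<noteq> 0" "k \<le> degree Pc" "nc (pcompose Pc [:- c, 1:]) k \<noteq> 0"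
    using c(1) k by (simp_all add: Pc_def pcompose_linear_cancel)
  from valuation_shift_coeff_witness[OF L this]
  obtain j where j: "j \<le> k" "nc Pc j \<noteq> 0" "v (nc Pc j) + of_nat (k - j) * v (- c) \<le> v (nc P k)"
    by (auto simp: Pc_def pcompose_linear_cancel)
  define \<sigma> where "\<sigma> = real_of_rat (s_max v P)"
  define Y where "Y i = real_of_rat (v (nc Pc i))" for i
  have "real_of_rat (last_edge v P j) \<le> Y j"
    using last_edge_le_valuation_shift[OF L N a0 aN c, of j] j k by (simp add: Y_def Pc_def of_rat_less_eq)
  moreover have "Y M = real_of_rat (last_edge v P j) + \<sigma> * (real M - real j)"
    using valuation_shift_coeff_m_max[OF L N a0 aN c] of_rat_last_edge[of v P j]
    by (simp add: Y_def \<sigma>_def Pc_def M_def np_point_def algebra_simps)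
  ultimately have "Y M \<le> Y j + \<sigma> * (real M - real j)"
    by linarith
  moreover have "Y j + \<sigma> * (real k - real j) \<le> snd z"
    using of_rat_add_of_nat_mult_le[OF j(3) j(1)] valuation_uminus[OF L c(1)] c(2)
    by (simp add: z Y_def \<sigma>_def np_point_def)
  moreover have "np_point v Pc j \<in> np_points v Pc" "np_point v Pc M \<in> np_points v Pc"
    using j k valuation_shift_coeff_m_max[OF L N a0 aN c] m_max_less_degree[OF N a0, of v]
    by (auto simp: np_point_in_np_points_iff Pc_def M_def)
  ultimately have "(real k, snd z) \<in> upper_hull (np_points v Pc)"
    using j k by (intro upper_hull_above_chord[where \<sigma> = \<sigma>]) (auto simp: np_point_def Y_def)
  then show "z \<in> upper_hull (np_points v (pcompose P [:c, 1:]))"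
    by (simp add: z np_point_def Pc_def)
qed

lemma newton_polygon_le:
  assumes "\<exists>y. (x, y) \<in> convex hull (np_points v Q)"
    and "\<And>y. (x, y) \<in> convex hull (np_points v Q) \<Longrightarrow> (x, y) \<in> upper_hull (np_points v P)"
  shows "newton_polygon v P x \<le> newton_polygon v Q x"
  unfolding newton_polygon_def
proof (rule cInf_greatest)
  show "{y. (x, y) \<in> convex hull np_points v Q} \<noteq> {}"
    using assms(1) by auto
next
  obtain b where b: "\<forall>z\<in>np_points v P. b \<le> inner (0, 1) z"
    using bdd_below_finite[OF finite_imageI[OF finite_np_points[of v P], of snd]]
    by (auto simp: bdd_below_def inner_prod_def)
  have "b \<le> y" if "(x, y) \<in> convex hull (np_points v P)" for y
    using convex_hull_halfspace_ge[OF b that] by simp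
  then have "bdd_below {y. (x, y) \<in> convex hull np_points v P}"
    by (intro bdd_belowI[of _ b]) auto
  fix y assume "y \<in> {y. (x, y) \<in> convex hull np_points v Q}"
  then obtain y1 t where "(x, y1) \<in> convex hull (np_points v P)" "y = y1 + t" "t \<ge> 0"
    using assms(2) unfolding upper_hull_def by blast
  then show "Inf {y. (x, y) \<in> convex hull np_points v P} \<le> y"
    using cInf_lower[OF _ \<open>bdd_below _\<close>, of y1] by force
qed

lemma convex_hull_np_points_fiber:
  assumes "nc P 0 \<noteq> 0" "m \<le> degree P" "nc P m \<noteq> 0" "0 \<le> x" "x \<le> real m"
  shows "\<exists>y. (x, y) \<in> convex hull (np_points v P)"
proof -
  have "np_point v P 0 \<in> np_points v P" "np_point v P m \<in> np_points v P"
    using assms(1-3) by (simp_all add: np_point_in_np_points_iff)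
  then show ?thesis
    using convex_hull_point_between[of 0 _ "np_points v P" "real m" _ x] assms(4,5)
    by (metis np_point_def of_nat_0)
qed

lemma newton_polygon_le_shift:
  fixes P :: "'a::field poly"
  assumes L: "padic_valued_field p v pw"
    and N: "1 \<le> degree P" and a0: "nc P 0 \<noteq> 0" and aN: "nc P (degree P) \<noteq> 0"
    and c: "c \<noteq> 0" "v c = s_max v P"
    and x: "0 \<le> x" "x \<le> real (m_max v P)"
  shows "newton_polygon v P x \<le> newton_polygon v (pcompose P [:c, 1:]) x"
proof (rule newton_polygon_le)
  show "\<exists>y. (x, y) \<in> convex hull (np_points v (pcompose P [:c, 1:]))"
    using convex_hull_np_points_fiber[of "pcompose P [:c, 1:]" "m_max v P" x v] a0 x
      valuation_shift_coeff_m_max[OF L N a0 aN c] m_max_less_degree[OF N a0, of v]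
    by simp
  have "upper_hull (np_points v (pcompose P [:c, 1:])) \<subseteq> upper_hull (np_points v P)"
    using np_points_shift_subset_upper_hull[OF L N a0 aN c] by (rule upper_hull_subset)
  then show "(x, y) \<in> upper_hull (np_points v P)"
    if "(x, y) \<in> convex hull (np_points v (pcompose P [:c, 1:]))" for y
    using that convex_hull_subset_upper_hull by blast
qed

lemma newton_polygon_shift_le:
  fixes P :: "'a::field poly"
  assumes L: "padic_valued_field p v pw"
    and N: "1 \<le> degree P" and a0: "nc P 0 \<noteq> 0" and aN: "nc P (degree P) \<noteq> 0"
    and c: "c \<noteq> 0" "v c = s_max v P"
    and x: "0 \<le> x" "x \<le> real (m_max v P)"
  shows "newton_polygon v (pcompose P [:c, 1:]) x \<le> newton_polygon v P x"
proof (rule newton_polygon_le)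
  define M where "M = m_max v P"
  define q where "q = np_point v P M"
  have "M < degree P" "nc P M \<noteq> 0"
    using m_max_less_degree[OF N a0, of v] m_max_breakpoint[OF N a0, of v]
    by (simp_all add: M_def np_breakpoint_def)
  then show "\<exists>y. (x, y) \<in> convex hull (np_points v P)"
    using convex_hull_np_points_fiber[of P M x v] a0 x by (simp add: M_def)
  have q: "q \<in> np_points v P" "fst q = real M"
    using \<open>M < degree P\<close> \<open>nc P M \<noteq> 0\<close> np_point_in_np_points_iff[of v P M]
    by (simp_all add: q_def np_point_def)
  have line: "\<forall>z\<in>np_points v P. snd q + real_of_rat (s_max v P) * (fst z - fst q) \<le> snd z"
    using np_points_above_last_edge[OF N a0 aN, of v] q(2) by (simp add: q_def M_def)
  have "(x, y) \<in> upper_hull {z \<in> np_points v P. fst z \<le> real M}"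
    if "(x, y) \<in> convex hull (np_points v P)" for y
    using convex_hull_left_of_supporting_point[OF q(1) line that] x q(2) by (simp add: M_def)
  moreover have "upper_hull {z \<in> np_points v P. fst z \<le> real M} \<subseteq> upper_hull (np_points v (pcompose P [:c, 1:]))"
    using np_points_left_subset_upper_hull_shift[OF L N a0 aN c] unfolding M_def by (rule upper_hull_subset)
  ultimately show "(x, y) \<in> upper_hull (np_points v (pcompose P [:c, 1:]))"
    if "(x, y) \<in> convex hull (np_points v P)" for y
    using that by blast
qed

theorem lemma2p4:
  fixes p :: nat and v :: "'a::field \<Rightarrow> rat" and pw :: "rat \<Rightarrow> 'a"
    and P :: "'a poly" and u :: 'a
  assumes L: "padic_valued_field p v pw"
    and N: "degree P \<ge> 1"
    and a0: "nc P 0 \<noteq> 0"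
    and aN: "nc P (degree P) \<noteq> 0"
    and u: "val_unit v u"
  shows "(\<forall>x\<in>{0..real (m_max v P)}.
            newton_polygon v (pcompose P [:u * pw (s_max v P), 1:]) x = newton_polygon v P x)
       \<and> (\<forall>k. m_max v P < k \<and> k \<le> degree P \<longrightarrow>
            nc (pcompose P [:u * pw (s_max v P), 1:]) k \<noteq> 0 \<longrightarrow>
            v (nc (pcompose P [:u * pw (s_max v P), 1:]) k)
              \<ge> v (nc P (m_max v P)) + s_max v P * (of_nat k - of_nat (m_max v P)))"
proof -
  define c where "c = u * pw (s_max v P)"
  have c: "c \<noteq> 0" "v c = s_max v P"
    using u valuation_pw[OF L] valuation_mult[OF L] by (auto simp: c_def val_unit_def)
  have "newton_polygon v (pcompose P [:c, 1:]) x = newton_polygon v P x"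
    if "x \<in> {0..real (m_max v P)}" for x
    using that newton_polygon_le_shift[OF L N a0 aN c] newton_polygon_shift_le[OF L N a0 aN c]
    by (simp add: order_antisym)
  moreover have "last_edge v P k \<le> v (nc (pcompose P [:c, 1:]) k)"
    if "k \<le> degree P" "nc (pcompose P [:c, 1:]) k \<noteq> 0" for k
    using last_edge_le_valuation_shift[OF L N a0 aN c that] .
  ultimately show ?thesis
    unfolding c_def last_edge_def by auto
qed

end
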